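(* Under the hypotheses that $\mathcal M$ is unichain and indexable and $\widehat{\mathcal M}$ has the same rewards and same support as $\mathcal M$ and satisfies Assumption (A): for every compact interval $[a,b]\subset\mathbb R$ there exists a constant $c_\lambda$ depending only on $\mathcal M$, $a$ and $b$ such that for every state $s$ and every policy $\pi\subseteq\mathcal S$, $$\max_{\lambda\in[a,b]}|\alpha^\pi_s(\lambda)-\hat\alpha^\pi_s(\lambda)|\le c_\lambda\|\mathcal M-\widehat{\mathcal M}\|_\infty.$$
   Context: Setting. An MDP is $\mathcal M=(\mathcal S,\{0,1\},(P^a)_a,(r^a)_a)$, finite $\mathcal S$, row-stochastic $P^0,P^1$, rewards $r^0,r^1\in\mathbb R^{\mathcal S}$. A policy is a subset $\pi\subseteq\mathcal S$ of states where action 1 is played, inducing $P^\pi$, $r^\pi$; $\mathcal M$ is unichain if every $P^\pi$ has a single recurrent class. For $\lambda\in\mathbb R$, $\mathcal M(\lambda)$ has the same transitions and rewards $r^1-\lambda\mathbf 1$ (action 1), $r^0$ (action 0). For a unichain policy, bias $b^\pi(\lambda)$ (up to additive constant) solves $g^\pi\mathbf 1+b^\pi=r^\pi+P^\pi b^\pi$ in $\mathcal M(\lambda)$; activation advantage $\alpha^\pi_s(\lambda)=r^1_s-\lambda-r^0_s+(P^1_{s,\cdot}-P^0_{s,\cdot})\cdot b^\pi(\lambda)$. BO (bias optimal) policy in $\mathcal M(\lambda)$: gain optimal and bias-maximal among gain-optimal policies; for unichain MDPs, $\pi$ is BO iff $\alpha^\pi_s(\lambda)\ge0$ for $s\in\pi$,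 $\le0$ for $s\notin\pi$. $\alpha^*_s(\lambda)$ is $\alpha^\pi_s(\lambda)$ for any BO $\pi$. $\mathcal M$ indexable: for each $s$ there is $\lambda_s$ (Whittle index) with $\alpha^*_s(\lambda)>0$ for $\lambda<\lambda_s$, $<0$ for $\lambda>\lambda_s$. Hats denote objects in $\widehat{\mathcal M}=(\mathcal S,\{0,1\},(\hat P^a)_a,(r^a)_a)$ (and $\widehat{\mathcal M}(\lambda)$). $\|A\|_\infty=\max_s\sum_{s'}|A_{s,s'}|$; $\|\mathcal M-\widehat{\mathcal M}\|_\infty=\max_a\|P^a-\hat P^a\|_\infty$. Same support: $P^a_{s,s'}>0\iff\hat P^a_{s,s'}>0$. Diameter of unichain $P$ with recurrent class $\mathcal S_r$: $D(P)=\max_{s\in\mathcal S,s'\in\mathcal S_r}\mathbb E^P[\tau_{s,s'}]$. Assumption (A): $\|\mathcal M-\widehat{\mathcal M}\|_\infty\le\min\{1/\max_\pi D(P^\pi),\ \tfrac12\min\{|\lambda_s-\lambda_{s'}|:\lambda_s\ne\lambda_{s'}\}\}$. *)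

theory Defs
  imports Complex_Main
begin

text \<open>
  Actions: bool (False = action 0, True = action 1).
  Transitions: P :: bool => 's => 's => real, P a s s' = P^a_{s,s'}.  A policy is a set pol of states (action 1 there).
\<close>

definition stochastic :: "('s::finite \<Rightarrow> 's \<Rightarrow> real) \<Rightarrow> bool" where
  "stochastic Q \<longleftrightarrow> (\<forall>x y. Q x y \<ge> 0) \<and> (\<forall>x. (\<Sum>y\<in>UNIV. Q x y) = 1)"

definition mdp_stochastic :: "(bool \<Rightarrow> 's::finite \<Rightarrow> 's \<Rightarrow> real) \<Rightarrow> bool" where
  "mdp_stochastic P \<longleftrightarrow> (\<forall>a. stochastic (P a))"

definition pol_mat :: "(bool \<Rightarrow> 's \<Rightarrow> 's \<Rightarrow> real) \<Rightarrow> 's set \<Rightarrow> 's \<Rightarrow> 's \<Rightarrow> real" where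
  "pol_mat P pol x y = P (x \<in> pol) x y"

definition pol_rew :: "(bool \<Rightarrow> 's \<Rightarrow> real) \<Rightarrow> real \<Rightarrow> 's set \<Rightarrow> 's \<Rightarrow> real" where
  "pol_rew r lam pol x = (if x \<in> pol then r True x - lam else r False x)"

definition reach :: "('s \<Rightarrow> 's \<Rightarrow> real) \<Rightarrow> 's \<Rightarrow> 's \<Rightarrow> bool" where
  "reach Q x y \<longleftrightarrow> (x, y) \<in> {(u, v). Q u v > 0}\<^sup>*"

definition recurrent :: "('s \<Rightarrow> 's \<Rightarrow> real) \<Rightarrow> 's \<Rightarrow> bool" where
  "recurrent Q x \<longleftrightarrow> (\<forall>y. reach Q x y \<longrightarrow> reach Q y x)"

text \<open>Single recurrent class: all recurrent states communicate (there is always at least one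
  recurrent state in a finite chain).\<close>
definition unichain_mat :: "('s \<Rightarrow> 's \<Rightarrow> real) \<Rightarrow> bool" where
  "unichain_mat Q \<longleftrightarrow> (\<forall>x y. recurrent Q x \<and> recurrent Q y \<longrightarrow> reach Q x y)"

definition unichain :: "(bool \<Rightarrow> 's \<Rightarrow> 's \<Rightarrow> real) \<Rightarrow> bool" where
  "unichain P \<longleftrightarrow> (\<forall>pol. unichain_mat (pol_mat P pol))"

text \<open>Stationary distribution (unique for unichain chains), gain and normalised bias.\<close>
definition stat_dist :: "('s::finite \<Rightarrow> 's \<Rightarrow> real) \<Rightarrow> 's \<Rightarrow> real" where
  "stat_dist Q = (SOME mu. (\<forall>x. mu x \<ge> 0) \<and> (\<Sum>x\<in>UNIV. mu x) = 1 \<and>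
                          (\<forall>y. (\<Sum>x\<in>UNIV. mu x * Q x y) = mu y))"

definition gain :: "(bool \<Rightarrow> 's::finite \<Rightarrow> 's \<Rightarrow> real) \<Rightarrow> (bool \<Rightarrow> 's \<Rightarrow> real) \<Rightarrow> real \<Rightarrow> 's set \<Rightarrow> real" where
  "gain P r lam pol = (\<Sum>x\<in>UNIV. stat_dist (pol_mat P pol) x * pol_rew r lam pol x)"

text \<open>Bias: solution of g 1 + b = r + P b, normalised by mu . b = 0
  (the advantage does not depend on the additive constant).\<close>
definition bias :: "(bool \<Rightarrow> 's::finite \<Rightarrow> 's \<Rightarrow> real) \<Rightarrow> (bool \<Rightarrow> 's \<Rightarrow> real) \<Rightarrow> real \<Rightarrow> 's set \<Rightarrow> 's \<Rightarrow> real" where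
  "bias P r lam pol = (SOME b.
      (\<forall>x. gain P r lam pol + b x = pol_rew r lam pol x + (\<Sum>y\<in>UNIV. pol_mat P pol x y * b y)) \<and>
      (\<Sum>x\<in>UNIV. stat_dist (pol_mat P pol) x * b x) = 0)"

definition adv :: "(bool \<Rightarrow> 's::finite \<Rightarrow> 's \<Rightarrow> real) \<Rightarrow> (bool \<Rightarrow> 's \<Rightarrow> real) \<Rightarrow> 's set \<Rightarrow> 's \<Rightarrow> real \<Rightarrow> real" where
  "adv P r pol s lam = r True s - lam - r False s +
      (\<Sum>y\<in>UNIV. (P True s y - P False s y) * bias P r lam pol y)"

definition bias_optimal :: "(bool \<Rightarrow> 's::finite \<Rightarrow> 's \<Rightarrow> real) \<Rightarrow> (bool \<Rightarrow> 's \<Rightarrow> real) \<Rightarrow> real \<Rightarrow> 's set \<Rightarrow> bool" where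
  "bias_optimal P r lam pol \<longleftrightarrow>
     (\<forall>pol'. gain P r lam pol' \<le> gain P r lam pol) \<and>
     (\<forall>pol'. gain P r lam pol' = gain P r lam pol \<longrightarrow> (\<forall>x. bias P r lam pol' x \<le> bias P r lam pol x))"

definition is_whittle_index :: "(bool \<Rightarrow> 's::finite \<Rightarrow> 's \<Rightarrow> real) \<Rightarrow> (bool \<Rightarrow> 's \<Rightarrow> real) \<Rightarrow> 's \<Rightarrow> real \<Rightarrow> bool" where
  "is_whittle_index P r s l \<longleftrightarrow>
     (\<forall>lam pol. bias_optimal P r lam pol \<longrightarrow>
        (lam < l \<longrightarrow> adv P r pol s lam > 0) \<and> (lam > l \<longrightarrow> adv P r pol s lam < 0))"

definition indexable :: "(bool \<Rightarrow> 's::finite \<Rightarrow> 's \<Rightarrow> real) \<Rightarrow> (bool \<Rightarrow> 's \<Rightarrow> real) \<Rightarrow> bool" where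
  "indexable P r \<longleftrightarrow> (\<forall>s. \<exists>l. is_whittle_index P r s l)"

definition whittle :: "(bool \<Rightarrow> 's::finite \<Rightarrow> 's \<Rightarrow> real) \<Rightarrow> (bool \<Rightarrow> 's \<Rightarrow> real) \<Rightarrow> 's \<Rightarrow> real" where
  "whittle P r s = (THE l. is_whittle_index P r s l)"

text \<open>Expected hitting time E[tau_{x,y}], tau = min{t >= 0 : X_t = y}, computed as
  sum_t Pr(tau > t) using taboo probabilities (paths avoiding y).\<close>
fun taboo_pow :: "('s::finite \<Rightarrow> 's \<Rightarrow> real) \<Rightarrow> 's \<Rightarrow> nat \<Rightarrow> 's \<Rightarrow> 's \<Rightarrow> real" where
  "taboo_pow Q y 0 u v = (if u = v \<and> u \<noteq> y then 1 else 0)"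
| "taboo_pow Q y (Suc t) u v =
     (if v = y then 0 else (\<Sum>w\<in>UNIV. taboo_pow Q y t u w * Q w v))"

definition hit_time :: "('s::finite \<Rightarrow> 's \<Rightarrow> real) \<Rightarrow> 's \<Rightarrow> 's \<Rightarrow> real" where
  "hit_time Q x y = (\<Sum>t. \<Sum>v\<in>UNIV. taboo_pow Q y t x v)"

definition diameter :: "('s::finite \<Rightarrow> 's \<Rightarrow> real) \<Rightarrow> real" where
  "diameter Q = Max {hit_time Q x y | x y. recurrent Q y}"

definition max_diameter :: "(bool \<Rightarrow> 's::finite \<Rightarrow> 's \<Rightarrow> real) \<Rightarrow> real" where
  "max_diameter P = Max {diameter (pol_mat P pol) | pol. True}"

definition mat_inf_norm :: "('s::finite \<Rightarrow> 's \<Rightarrow> real) \<Rightarrow> real" where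
  "mat_inf_norm A = Max {(\<Sum>y\<in>UNIV. \<bar>A x y\<bar>) | x. True}"

definition mdp_dist :: "(bool \<Rightarrow> 's::finite \<Rightarrow> 's \<Rightarrow> real) \<Rightarrow> (bool \<Rightarrow> 's \<Rightarrow> 's \<Rightarrow> real) \<Rightarrow> real" where
  "mdp_dist P Q = max (mat_inf_norm (\<lambda>x y. P False x y - Q False x y))
                      (mat_inf_norm (\<lambda>x y. P True x y - Q True x y))"

definition same_support :: "(bool \<Rightarrow> 's \<Rightarrow> 's \<Rightarrow> real) \<Rightarrow> (bool \<Rightarrow> 's \<Rightarrow> 's \<Rightarrow> real) \<Rightarrow> bool" where
  "same_support P Q \<longleftrightarrow> (\<forall>a x y. P a x y > 0 \<longleftrightarrow> Q a x y > 0)"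

text \<open>Assumption (A). The minimum over distinct Whittle-index gaps is +infinity when there
  are no distinct indices; this is encoded by quantifying over pairs with distinct indices.\<close>
definition assumption_A :: "(bool \<Rightarrow> 's::finite \<Rightarrow> 's \<Rightarrow> real) \<Rightarrow> (bool \<Rightarrow> 's \<Rightarrow> real) \<Rightarrow> (bool \<Rightarrow> 's \<Rightarrow> 's \<Rightarrow> real) \<Rightarrow> bool" where
  "assumption_A P r Q \<longleftrightarrow>
     mdp_dist P Q \<le> 1 / max_diameter P \<and>
     (\<forall>s s'. whittle P r s \<noteq> whittle P r s' \<longrightarrow>
        mdp_dist P Q \<le> \<bar>whittle P r s - whittle P r s'\<bar> / 2)"

end

theory Submission
  imports Defs "HOL-Analysis.Analysis"
begin

text \<open>
  Fix a policy and let z be a state of the recurrent class of P^pi; it is reachable from every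
  state, and by the same-support assumption also in the perturbed chain. Everything rests on the
  minimum principle for functions that are superharmonic off z. It makes the expected hitting
  time h of z (bounded by the diameter D) a potential that controls every solution of a Poisson
  equation f = v + Q f: |f x - f z| \<le> max |v| * h x. For the perturbed chain 2h is still a
  supersolution as soon as \<delta> D \<le> 1 (\<delta> = ||P - P^||), which is Assumption (A). The difference of the
  two biases solves a Poisson equation for the perturbed chain whose right-hand side, the gain
  difference plus (P - P^) b, is O(\<delta>), so its span is O(\<delta>). Finally the advantage difference
  pairs that span with weights of total mass at most 2, and the span of the perturbed bias with
  weights of total mass at most 2\<delta>.
\<close>

section \<open>Stochastic matrices\<close>

lemma
  assumes "stochastic Q"
  shows stochastic_nonneg: "Q x y \<ge> 0" and stochastic_row_sum: "(\<Sum>y\<in>UNIV. Q x y) = 1"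
  using assms unfolding stochastic_def by auto

lemma stochastic_sum_shift:
  assumes "stochastic Q"
  shows "(\<Sum>y\<in>UNIV. Q x y * (f y + c)) = (\<Sum>y\<in>UNIV. Q x y * f y) + c"
  using stochastic_row_sum[OF assms, of x]
  by (simp add: distrib_left sum.distrib flip: sum_distrib_right)

lemma stochastic_row_diff_sum:
  assumes "stochastic Q" and "stochastic Q'"
  shows "(\<Sum>y\<in>UNIV. Q x y - Q' x y) = 0"
  using assms by (simp add: sum_subtractf stochastic_row_sum)

lemma sum_abs_stochastic_row_diff_le:
  assumes "stochastic Q" and "stochastic Q'"
  shows "(\<Sum>y\<in>UNIV. \<bar>Q x y - Q' x y\<bar>) \<le> 2"
proof -
  have "(\<Sum>y\<in>UNIV. \<bar>Q x y - Q' x y\<bar>) \<le> (\<Sum>y\<in>UNIV. Q x y + Q' x y)"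
    using assms by (intro sum_mono) (simp add: stochastic_nonneg abs_le_iff)
  also have "\<dots> = 2" using assms by (simp add: sum.distrib stochastic_row_sum)
  finally show ?thesis .
qed

lemma abs_sum_zero_sum_weights_le:
  fixes A u :: "'s::finite \<Rightarrow> real"
  assumes "(\<Sum>y\<in>UNIV. A y) = 0" and "\<And>y. \<bar>u y - c\<bar> \<le> K"
  shows "\<bar>\<Sum>y\<in>UNIV. A y * u y\<bar> \<le> (\<Sum>y\<in>UNIV. \<bar>A y\<bar>) * K"
proof -
  have "(\<Sum>y\<in>UNIV. A y * u y) = (\<Sum>y\<in>UNIV. A y * (u y - c)) + c * (\<Sum>y\<in>UNIV. A y)"
    by (simp add: algebra_simps sum.distrib sum_subtractf sum_distrib_left)
  also have "\<dots> = (\<Sum>y\<in>UNIV. A y * (u y - c))" using assms(1) by simp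
  also have "\<bar>\<dots>\<bar> \<le> (\<Sum>y\<in>UNIV. \<bar>A y\<bar> * \<bar>u y - c\<bar>)"
    by (rule order_trans[OF sum_abs]) (simp add: abs_mult)
  also have "\<dots> \<le> (\<Sum>y\<in>UNIV. \<bar>A y\<bar> * K)" by (intro sum_mono mult_left_mono assms(2)) simp
  finally show ?thesis by (simp add: sum_distrib_right)
qed

lemma abs_sum_distribution_le:
  fixes mu w :: "'s::finite \<Rightarrow> real"
  assumes "\<And>x. mu x \<ge> 0" and "(\<Sum>x\<in>UNIV. mu x) = 1" and "\<And>x. \<bar>w x\<bar> \<le> K"
  shows "\<bar>\<Sum>x\<in>UNIV. mu x * w x\<bar> \<le> K"
proof -
  have "\<bar>\<Sum>x\<in>UNIV. mu x * w x\<bar> \<le> (\<Sum>x\<in>UNIV. mu x * K)"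
    using assms(1,3) by (intro order_trans[OF sum_abs] sum_mono) (simp add: abs_mult mult_left_mono)
  also have "\<dots> = K" using assms(2) by (simp flip: sum_distrib_right)
  finally show ?thesis .
qed

section \<open>Accessibility\<close>

lemma reach_refl [simp]: "reach Q x x"
  unfolding reach_def by simp

lemma reach_trans: "reach Q x y \<Longrightarrow> reach Q y w \<Longrightarrow> reach Q x w"
  unfolding reach_def by (rule rtrancl_trans)

lemma reach_recurrent:
  fixes Q :: "'s::finite \<Rightarrow> 's \<Rightarrow> real"
  obtains y where "reach Q x y" "recurrent Q y"
proof -
  obtain y where xy: "reach Q x y"
    and least: "\<And>w. reach Q x w \<Longrightarrow> card {v. reach Q y v} \<le> card {v. reach Q w v}"
    using ex_has_least_nat[of "reach Q x" x "\<lambda>y. card {v. reach Q y v}"] by auto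
  have "reach Q w y" if yw: "reach Q y w" for w
  proof -
    have sub: "{v. reach Q w v} \<subseteq> {v. reach Q y v}" using reach_trans[OF yw] by blast
    have le: "card {v. reach Q w v} \<le> card {v. reach Q y v}" by (rule card_mono) (simp_all add: sub)
    have ge: "card {v. reach Q y v} \<le> card {v. reach Q w v}" by (rule least[OF reach_trans[OF xy yw]])
    have "{v. reach Q w v} = {v. reach Q y v}"
      using card_subset_eq[OF _ sub] le ge by simp
    then show ?thesis using reach_refl[of Q y] by blast
  qed
  then have "recurrent Q y" unfolding recurrent_def by blast
  with xy show ?thesis by (rule that)
qed

lemma unichain_mat_center:
  fixes Q :: "'s::finite \<Rightarrow> 's \<Rightarrow> real"
  assumes "unichain_mat Q"
  obtains z where "recurrent Q z" "\<And>x. reach Q x z"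
proof -
  obtain z where z: "recurrent Q z" using reach_recurrent by blast
  have "reach Q x z" for x
  proof -
    obtain y where xy: "reach Q x y" and "recurrent Q y" using reach_recurrent by blast
    then have "reach Q y z" using assms z unfolding unichain_mat_def by blast
    with xy show ?thesis by (rule reach_trans)
  qed
  with z that show ?thesis by blast
qed

section \<open>Poisson equations off an accessible state\<close>

text \<open>The minimum of g propagates along every edge leaving a state other than z, so it is
  attained at z.\<close>
lemma superharmonic_off_nonneg:
  fixes Q :: "'s::finite \<Rightarrow> 's \<Rightarrow> real"
  assumes Q: "stochastic Q" and reach_z: "\<And>x. reach Q x z"
    and gz: "g z \<ge> 0" and super: "\<And>x. x \<noteq> z \<Longrightarrow> (\<Sum>y\<in>UNIV. Q x y * g y) \<le> g x"
  shows "g x \<ge> 0"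
proof (rule ccontr)
  assume "\<not> g x \<ge> 0"
  define m where "m = Min (range g)"
  have m_le: "m \<le> g y" for y unfolding m_def by simp
  have "m \<in> range g" unfolding m_def by (rule Min_in) auto
  then obtain x0 where x0: "g x0 = m" by auto
  have m_neg: "m < 0" using m_le[of x] \<open>\<not> g x \<ge> 0\<close> by linarith
  have "g y = m" if "reach Q x0 y" for y
    using that unfolding reach_def
  proof (induction rule: rtrancl_induct)
    case base
    then show ?case using x0 by simp
  next
    case (step u v)
    have "u \<noteq> z" using step.IH gz m_neg by auto
    have "(\<Sum>y\<in>UNIV. Q u y * (g y - m)) = (\<Sum>y\<in>UNIV. Q u y * g y) - m"
      using stochastic_sum_shift[OF Q, of u g "- m"] by simp
    also have "\<dots> \<le> 0" using super[OF \<open>u \<noteq> z\<close>] step.IH by simp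
    finally have "(\<Sum>y\<in>UNIV. Q u y * (g y - m)) \<le> 0" .
    moreover have nonneg: "\<And>y. Q u y * (g y - m) \<ge> 0"
      using stochastic_nonneg[OF Q] m_le by simp
    ultimately have "(\<Sum>y\<in>UNIV. Q u y * (g y - m)) = 0" by (simp add: antisym sum_nonneg)
    then have "\<forall>y\<in>UNIV. Q u y * (g y - m) = 0" using nonneg by (subst (asm) sum_nonneg_eq_0_iff) auto
    then have "Q u v * (g v - m) = 0" by simp
    then show ?case using step.hyps(2) by simp
  qed
  then show False using reach_z[of x0] gz m_neg by simp
qed

lemma harmonic_off_pinned_eq_0:
  fixes Q :: "'s::finite \<Rightarrow> 's \<Rightarrow> real"
  assumes Q: "stochastic Q" and reach_z: "\<And>x. reach Q x z"
    and "d z = 0" and "\<And>x. x \<noteq> z \<Longrightarrow> d x = (\<Sum>y\<in>UNIV. Q x y * d y)"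
  shows "d x = 0"
proof -
  have "d x \<ge> 0"
    by (rule superharmonic_off_nonneg[OF Q reach_z]) (use assms in auto)
  moreover have "- d x \<ge> 0"
    by (rule superharmonic_off_nonneg[OF Q reach_z, of "\<lambda>x. - d x"]) (use assms in \<open>auto simp: sum_negf\<close>)
  ultimately show ?thesis by simp
qed

lemma pinned_poisson_solvable:
  fixes Q :: "'s::finite \<Rightarrow> 's \<Rightarrow> real"
  assumes Q: "stochastic Q" and reach_z: "\<And>x. reach Q x z"
  obtains f where "f z = 0" "\<And>x. x \<noteq> z \<Longrightarrow> f x = v x + (\<Sum>y\<in>UNIV. Q x y * f y)"
proof -
  define K :: "real^'s \<Rightarrow> real^'s" where
    "K u = (\<chi> x. if x = z then u$z else u$x - (\<Sum>y\<in>UNIV. Q x y * u$y))" for u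
  have lin: "linear K"
    by (rule linearI) (simp_all add: K_def vec_eq_iff sum.distrib sum_distrib_left algebra_simps)
  have "inj K"
  proof (rule injI)
    fix u u' assume eq: "K u = K u'"
    have "u$x - u'$x = 0" for x
    proof (rule harmonic_off_pinned_eq_0[OF Q reach_z, of "\<lambda>x. u$x - u'$x"])
      show "u$z - u'$z = 0" using arg_cong[OF eq, of "\<lambda>w. w$z"] by (simp add: K_def)
      fix x assume "x \<noteq> z"
      then have "u$x - (\<Sum>y\<in>UNIV. Q x y * u$y) = u'$x - (\<Sum>y\<in>UNIV. Q x y * u'$y)"
        using arg_cong[OF eq, of "\<lambda>w. w$x"] by (simp add: K_def)
      then show "u$x - u'$x = (\<Sum>y\<in>UNIV. Q x y * (u$y - u'$y))"
        by (simp add: right_diff_distrib sum_subtractf)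
    qed
    then show "u = u'" by (simp add: vec_eq_iff)
  qed
  then have "surj K" using linear_injective_imp_surjective[OF lin] by simp
  then obtain u where u: "K u = (\<chi> x. if x = z then 0 else v x)" by (metis surjD)
  show ?thesis
  proof (rule that[of "\<lambda>x. u$x"])
    show "u$z = 0" using arg_cong[OF u, of "\<lambda>u. u$z"] by (simp add: K_def)
    fix x assume "x \<noteq> z"
    then show "u$x = v x + (\<Sum>y\<in>UNIV. Q x y * u$y)"
      using arg_cong[OF u, of "\<lambda>u. u$x"] by (simp add: K_def)
  qed
qed

text \<open>Both m H - (f - f z) and m H + (f - f z) are superharmonic off z.\<close>
lemma poisson_span_le_potential:
  fixes Q :: "'s::finite \<Rightarrow> 's \<Rightarrow> real"
  assumes Q: "stochastic Q" and reach_z: "\<And>x. reach Q x z"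
    and Hz: "H z \<ge> 0" and H: "\<And>x. x \<noteq> z \<Longrightarrow> 1 + (\<Sum>y\<in>UNIV. Q x y * H y) \<le> H x"
    and f: "\<And>x. f x = v x + (\<Sum>y\<in>UNIV. Q x y * f y)" and v: "\<And>x. \<bar>v x\<bar> \<le> m"
  shows "\<bar>f x - f z\<bar> \<le> m * H x"
proof -
  have m: "m \<ge> 0" using v[of z] by linarith
  have "m * H x - s * (f x - f z) \<ge> 0" if s: "\<bar>s\<bar> = 1" for s
  proof (rule superharmonic_off_nonneg[OF Q reach_z, of "\<lambda>x. m * H x - s * (f x - f z)"])
    show "0 \<le> m * H z - s * (f z - f z)" using Hz m by simp
    fix x assume "x \<noteq> z"
    have "(\<Sum>y\<in>UNIV. Q x y * (m * H y - s * (f y - f z)))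
        = m * (\<Sum>y\<in>UNIV. Q x y * H y) - s * (\<Sum>y\<in>UNIV. Q x y * f y) + s * f z"
      using stochastic_sum_shift[OF Q, of x "\<lambda>y. m * H y - s * f y" "s * f z"]
      by (simp add: algebra_simps sum_subtractf sum_distrib_left)
    also have "\<dots> \<le> m * H x - m - s * (f x - v x) + s * f z"
      using mult_left_mono[OF H[OF \<open>x \<noteq> z\<close>] m] f[of x] by (simp add: algebra_simps)
    also have "\<dots> \<le> m * H x - s * (f x - f z)"
      using v[of x] s abs_mult[of s "v x"] abs_le_iff[of "s * v x" m] by (simp add: algebra_simps)
    finally show "(\<Sum>y\<in>UNIV. Q x y * (m * H y - s * (f y - f z))) \<le> m * H x - s * (f x - f z)" .
  qed
  from this[of 1] this[of "- 1"] show ?thesis by (simp add: abs_le_iff)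
qed

section \<open>Stationary distributions\<close>

definition stationary_distribution ::
    "('s::finite \<Rightarrow> 's \<Rightarrow> real) \<Rightarrow> ('s \<Rightarrow> real) \<Rightarrow> bool" where
  "stationary_distribution Q mu \<longleftrightarrow> (\<forall>x. mu x \<ge> 0) \<and> (\<Sum>x\<in>UNIV. mu x) = 1 \<and>
     (\<forall>y. (\<Sum>x\<in>UNIV. mu x * Q x y) = mu y)"

lemma stationary_sum_mult:
  assumes "stationary_distribution Q mu"
  shows "(\<Sum>x\<in>UNIV. mu x * (\<Sum>y\<in>UNIV. Q x y * f y)) = (\<Sum>y\<in>UNIV. mu y * f y)"
proof -
  have "(\<Sum>x\<in>UNIV. mu x * (\<Sum>y\<in>UNIV. Q x y * f y)) = (\<Sum>x\<in>UNIV. \<Sum>y\<in>UNIV. mu x * Q x y * f y)"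
    by (simp add: sum_distrib_left mult.assoc)
  also have "\<dots> = (\<Sum>y\<in>UNIV. \<Sum>x\<in>UNIV. mu x * Q x y * f y)" by (rule sum.swap)
  also have "\<dots> = (\<Sum>y\<in>UNIV. (\<Sum>x\<in>UNIV. mu x * Q x y) * f y)" by (simp add: sum_distrib_right)
  finally show ?thesis using assms unfolding stationary_distribution_def by simp
qed

lemma stochastic_left_fixed_vector:
  fixes Q :: "'s::finite \<Rightarrow> 's \<Rightarrow> real"
  assumes Q: "stochastic Q"
  obtains nu where "\<exists>x. nu x \<noteq> 0" "\<And>y. (\<Sum>x\<in>UNIV. nu x * Q x y) = nu y"
proof -
  define M :: "real^'s^'s" where "M = (\<chi> x y. Q x y)"
  define A where "A = mat 1 - M"
  have "M *v (\<chi> _. 1) = (\<chi> _. 1)"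
    by (simp add: M_def matrix_vector_mult_def stochastic_row_sum[OF Q])
  then have "A *v (\<chi> _. 1) = 0" by (simp add: A_def matrix_vector_mult_diff_rdistrib)
  moreover have "(\<chi> _. 1) \<noteq> (0 :: real^'s)" by (simp add: vec_eq_iff)
  ultimately have "\<not> (\<exists>B. B ** A = mat 1)" by (auto simp: matrix_left_invertible_ker)
  then have "\<not> (\<exists>B. A ** B = mat 1)" using invertible_left_inverse invertible_right_inverse by blast
  then have "\<not> (\<exists>B. B ** transpose A = mat 1)" by (simp add: left_invertible_transpose)
  then obtain v where "v \<noteq> 0" and "transpose A *v v = 0" by (auto simp: matrix_left_invertible_ker)
  then have "v v* M = v" by (simp add: A_def vector_matrix_mult_diff_rdistrib)
  then have "(\<Sum>x\<in>UNIV. v$x * Q x y) = v$y" for y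
    by (simp add: M_def vector_matrix_mult_def vec_eq_iff)
  moreover have "\<exists>x. v$x \<noteq> 0" using \<open>v \<noteq> 0\<close> by (simp add: vec_eq_iff)
  ultimately show ?thesis using that[of "\<lambda>x. v$x"] by blast
qed

text \<open>The absolute value of a left fixed vector is a left subinvariant measure of the same mass,
  hence invariant.\<close>
lemma stationary_distribution_exists:
  fixes Q :: "'s::finite \<Rightarrow> 's \<Rightarrow> real"
  assumes Q: "stochastic Q"
  obtains mu where "stationary_distribution Q mu"
proof -
  obtain nu where nu0: "\<exists>x. nu x \<noteq> 0" and nu: "\<And>y. (\<Sum>x\<in>UNIV. nu x * Q x y) = nu y"
    using stochastic_left_fixed_vector[OF Q] by blast
  define p where "p x = \<bar>nu x\<bar>" for x
  have sub: "p y \<le> (\<Sum>x\<in>UNIV. p x * Q x y)" for y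
    unfolding p_def nu[of y, symmetric]
    by (rule order_trans[OF sum_abs]) (simp add: abs_mult stochastic_nonneg[OF Q])
  have "(\<Sum>y\<in>UNIV. \<Sum>x\<in>UNIV. p x * Q x y) = (\<Sum>x\<in>UNIV. p x)"
    by (subst sum.swap) (simp add: stochastic_row_sum[OF Q] flip: sum_distrib_left)
  then have "(\<Sum>y\<in>UNIV. (\<Sum>x\<in>UNIV. p x * Q x y) - p y) = 0" by (simp add: sum_subtractf)
  then have "\<forall>y\<in>UNIV. (\<Sum>x\<in>UNIV. p x * Q x y) - p y = 0"
    using sub by (subst (asm) sum_nonneg_eq_0_iff) auto
  then have inv: "(\<Sum>x\<in>UNIV. p x * Q x y) = p y" for y by simp
  define S where "S = (\<Sum>x\<in>UNIV. p x)"
  have "S > 0"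
  proof -
    obtain x0 where "nu x0 \<noteq> 0" using nu0 by blast
    then show ?thesis using sum_pos2[of UNIV x0 p] by (simp add: S_def p_def)
  qed
  have "stationary_distribution Q (\<lambda>x. p x / S)"
    unfolding stationary_distribution_def
  proof (intro conjI allI)
    show "p x / S \<ge> 0" for x using \<open>S > 0\<close> by (simp add: p_def)
    show "(\<Sum>x\<in>UNIV. p x / S) = 1" using \<open>S > 0\<close> by (simp add: S_def flip: sum_divide_distrib)
    show "(\<Sum>x\<in>UNIV. p x / S * Q x y) = p y / S" for y
      using inv[of y] by (simp flip: sum_divide_distrib)
  qed
  then show ?thesis by (rule that)
qed

lemma stationary_pos_at_accessible:
  fixes Q :: "'s::finite \<Rightarrow> 's \<Rightarrow> real"
  assumes Q: "stochastic Q" and reach_z: "\<And>x. reach Q x z"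
    and mu: "stationary_distribution Q mu"
  shows "mu z > 0"
proof -
  have mu0: "\<And>x. mu x \<ge> 0" and mu1: "(\<Sum>x\<in>UNIV. mu x) = 1"
    and inv: "\<And>y. (\<Sum>x\<in>UNIV. mu x * Q x y) = mu y"
    using mu unfolding stationary_distribution_def by auto
  obtain x0 where "mu x0 \<noteq> 0" using mu1 by (metis sum.neutral zero_neq_one)
  then have "mu x0 > 0" using mu0[of x0] by simp
  have "mu y > 0" if "reach Q x0 y" for y
    using that unfolding reach_def
  proof (induction rule: rtrancl_induct)
    case base
    show ?case by fact
  next
    case (step u v)
    then have "0 < mu u * Q u v" by simp
    also have "\<dots> \<le> (\<Sum>x\<in>UNIV. mu x * Q x v)"
      by (rule member_le_sum) (simp_all add: mu0 stochastic_nonneg[OF Q])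
    finally show ?case using inv by simp
  qed
  then show ?thesis using reach_z by blast
qed

text \<open>Solve the equation off z with f z = 0; averaging its defect at z against mu gives zero,
  and mu z > 0.\<close>
lemma poisson_solvable:
  fixes Q :: "'s::finite \<Rightarrow> 's \<Rightarrow> real"
  assumes Q: "stochastic Q" and reach_z: "\<And>x. reach Q x z"
    and mu: "stationary_distribution Q mu"
  obtains b where "\<And>x. (\<Sum>y\<in>UNIV. mu y * rho y) + b x = rho x + (\<Sum>y\<in>UNIV. Q x y * b y)"
    "(\<Sum>x\<in>UNIV. mu x * b x) = 0"
proof -
  define g where "g = (\<Sum>x\<in>UNIV. mu x * rho x)"
  obtain f where fx: "\<And>x. x \<noteq> z \<Longrightarrow> f x = (rho x - g) + (\<Sum>y\<in>UNIV. Q x y * f y)"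
    using pinned_poisson_solvable[OF Q reach_z, where v = "\<lambda>x. rho x - g"] by blast
  define d where "d x = f x - (rho x - g) - (\<Sum>y\<in>UNIV. Q x y * f y)" for x
  have mu1: "(\<Sum>x\<in>UNIV. mu x) = 1" using mu unfolding stationary_distribution_def by simp
  have "(\<Sum>x\<in>UNIV. mu x * d x) = (\<Sum>x\<in>UNIV. mu x * f x) - (\<Sum>x\<in>UNIV. mu x * rho x)
      + g * (\<Sum>x\<in>UNIV. mu x) - (\<Sum>x\<in>UNIV. mu x * (\<Sum>y\<in>UNIV. Q x y * f y))"
    unfolding d_def by (simp add: algebra_simps sum.distrib sum_subtractf sum_distrib_left)
  also have "\<dots> = 0" using stationary_sum_mult[OF mu] mu1 by (simp add: g_def)
  finally have "(\<Sum>x\<in>UNIV. mu x * d x) = 0" .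
  moreover have "(\<Sum>x\<in>UNIV. mu x * d x) = mu z * d z"
  proof -
    have "d x = 0" if "x \<noteq> z" for x using fx[OF that] by (simp add: d_def)
    then have "(\<Sum>x\<in>UNIV. mu x * d x) = (\<Sum>x\<in>UNIV. if x = z then mu z * d z else 0)"
      by (intro sum.cong) auto
    then show ?thesis by simp
  qed
  ultimately have "d z = 0" using stationary_pos_at_accessible[OF Q reach_z mu] by simp
  then have f: "f x = (rho x - g) + (\<Sum>y\<in>UNIV. Q x y * f y)" for x
    using fx unfolding d_def by (cases "x = z") auto
  define k where "k = (\<Sum>x\<in>UNIV. mu x * f x)"
  show ?thesis
  proof (rule that[of "\<lambda>x. f x - k"], unfold g_def[symmetric])
    show "g + (f x - k) = rho x + (\<Sum>y\<in>UNIV. Q x y * (f y - k))" for x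
      using f[of x] stochastic_sum_shift[OF Q, of x f "- k"] by simp
    show "(\<Sum>x\<in>UNIV. mu x * (f x - k)) = 0"
      using mu1 by (simp add: k_def right_diff_distrib sum_subtractf flip: sum_distrib_right)
  qed
qed

section \<open>Hitting times\<close>

lemma taboo_pow_nonneg: "stochastic Q \<Longrightarrow> taboo_pow Q z t x v \<ge> 0"
  by (induction t arbitrary: v) (auto intro!: sum_nonneg simp: stochastic_nonneg)

lemma taboo_pow_target [simp]: "taboo_pow Q z t x z = 0"
  by (cases t) auto

text \<open>Read probabilistically: h x = E[min(tau, T)] + E[h(X_T); tau > T], tau the hitting time of z.\<close>
lemma potential_taboo_expansion:
  fixes Q :: "'s::finite \<Rightarrow> 's \<Rightarrow> real"
  assumes hz: "h z = 0" and hx: "\<And>x. x \<noteq> z \<Longrightarrow> h x = 1 + (\<Sum>y\<in>UNIV. Q x y * h y)"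
  shows "h x = (\<Sum>t<T. \<Sum>v\<in>UNIV. taboo_pow Q z t x v) + (\<Sum>v\<in>UNIV. taboo_pow Q z T x v * h v)"
proof (induction T)
  case 0
  have "(\<Sum>v\<in>UNIV. taboo_pow Q z 0 x v * h v) = (\<Sum>v\<in>UNIV. if v = x then h x else 0)"
    using hz by (intro sum.cong) auto
  then show ?case by simp
next
  case (Suc T)
  have "(\<Sum>v\<in>UNIV. taboo_pow Q z (Suc T) x v * h v)
      = (\<Sum>v\<in>UNIV. \<Sum>w\<in>UNIV. taboo_pow Q z T x w * Q w v * h v)"
    using hz by (intro sum.cong) (auto simp: sum_distrib_right)
  also have "\<dots> = (\<Sum>w\<in>UNIV. taboo_pow Q z T x w * (\<Sum>v\<in>UNIV. Q w v * h v))"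
    by (subst sum.swap) (simp add: sum_distrib_left mult.assoc)
  also have "\<dots> = (\<Sum>w\<in>UNIV. taboo_pow Q z T x w * h w - taboo_pow Q z T x w)"
  proof (rule sum.cong)
    fix w
    show "taboo_pow Q z T x w * (\<Sum>v\<in>UNIV. Q w v * h v) = taboo_pow Q z T x w * h w - taboo_pow Q z T x w"
      using hx[of w] by (cases "w = z") (auto simp: algebra_simps)
  qed simp
  finally show ?case using Suc.IH by (simp add: sum_subtractf)
qed

lemma hit_time_eq_potential:
  fixes Q :: "'s::finite \<Rightarrow> 's \<Rightarrow> real"
  assumes Q: "stochastic Q" and hz: "h z = 0"
    and hx: "\<And>x. x \<noteq> z \<Longrightarrow> h x = 1 + (\<Sum>y\<in>UNIV. Q x y * h y)" and h: "\<And>x. h x \<ge> 0"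
  shows "hit_time Q x z = h x"
proof -
  define a where "a t = (\<Sum>v\<in>UNIV. taboo_pow Q z t x v)" for t
  define R where "R t = (\<Sum>v\<in>UNIV. taboo_pow Q z t x v * h v)" for t
  have expansion: "h x = (\<Sum>t<T. a t) + R T" for T
    unfolding a_def R_def by (rule potential_taboo_expansion[OF hz hx])
  have a: "a t \<ge> 0" for t unfolding a_def by (intro sum_nonneg taboo_pow_nonneg[OF Q])
  have R: "R t \<ge> 0" for t unfolding R_def by (intro sum_nonneg mult_nonneg_nonneg taboo_pow_nonneg[OF Q] h)
  have "summable a"
    using expansion R by (intro summableI_nonneg_bounded[of _ "h x"] a) (metis le_add_same_cancel1)
  then have "a \<longlonglongrightarrow> 0" by (rule summable_LIMSEQ_zero)
  define S where "S = (\<Sum>v\<in>UNIV. h v)"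
  have "R t \<le> a t * S" for t
  proof -
    have "R t \<le> (\<Sum>v\<in>UNIV. taboo_pow Q z t x v * S)" unfolding R_def S_def
      by (intro sum_mono mult_left_mono member_le_sum taboo_pow_nonneg[OF Q]) (simp_all add: h)
    then show ?thesis by (simp add: a_def sum_distrib_right)
  qed
  moreover have "(\<lambda>t. a t * S) \<longlonglongrightarrow> 0"
    using tendsto_mult_left_zero[OF \<open>a \<longlonglongrightarrow> 0\<close>] by simp
  ultimately have "R \<longlonglongrightarrow> 0" by (rule_tac tendsto_sandwich[OF _ _ tendsto_const]) (auto simp: R)
  then have "(\<lambda>T. h x - R T) \<longlonglongrightarrow> h x - 0" by (intro tendsto_diff tendsto_const)
  moreover have "h x - R T = (\<Sum>t<T. a t)" for T using expansion[of T] by simp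
  ultimately have "(\<lambda>T. \<Sum>t<T. a t) \<longlonglongrightarrow> h x" by simp
  then have "a sums h x" by (simp add: sums_def)
  then show ?thesis unfolding hit_time_def a_def[symmetric] by (simp add: sums_iff)
qed

lemma hitting_potential:
  fixes Q :: "'s::finite \<Rightarrow> 's \<Rightarrow> real"
  assumes Q: "stochastic Q" and reach_z: "\<And>x. reach Q x z"
  obtains h where "h z = 0" "\<And>x. x \<noteq> z \<Longrightarrow> h x = 1 + (\<Sum>y\<in>UNIV. Q x y * h y)"
    "\<And>x. h x \<ge> 0" "\<And>x. hit_time Q x z = h x"
proof -
  obtain h where hz: "h z = 0" and hx: "\<And>x. x \<noteq> z \<Longrightarrow> h x = 1 + (\<Sum>y\<in>UNIV. Q x y * h y)"
    using pinned_poisson_solvable[OF Q reach_z, where v = "\<lambda>_. 1"] by blast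
  have h: "h x \<ge> 0" for x
    by (rule superharmonic_off_nonneg[OF Q reach_z]) (simp_all add: hz hx)
  show ?thesis by (rule that[OF hz hx h hit_time_eq_potential[OF Q hz hx h]])
qed

section \<open>Perturbation of the Poisson equation\<close>

text \<open>Passing from Q to Q' changes Q h by at most \<delta> D / 2 \<le> 1 / 2.\<close>
lemma doubled_potential_supersolution:
  fixes Q Q' :: "'s::finite \<Rightarrow> 's \<Rightarrow> real"
  assumes Q: "stochastic Q" and Q': "stochastic Q'"
    and hx: "h x = 1 + (\<Sum>y\<in>UNIV. Q x y * h y)" and h: "\<And>y. 0 \<le> h y" "\<And>y. h y \<le> D"
    and row: "(\<Sum>y\<in>UNIV. \<bar>Q x y - Q' x y\<bar>) \<le> \<delta>" and "\<delta> * D \<le> 1"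
  shows "1 + (\<Sum>y\<in>UNIV. Q' x y * (2 * h y)) \<le> 2 * h x"
proof -
  define E where "E = (\<Sum>y\<in>UNIV. (Q x y - Q' x y) * h y)"
  have h_centered: "\<bar>h y - D / 2\<bar> \<le> D / 2" for y unfolding abs_le_iff using h[of y] by linarith
  have "0 \<le> D" using h[of x] by linarith
  have "\<bar>E\<bar> \<le> (\<Sum>y\<in>UNIV. \<bar>Q x y - Q' x y\<bar>) * (D / 2)"
    unfolding E_def by (rule abs_sum_zero_sum_weights_le[OF stochastic_row_diff_sum[OF Q Q'] h_centered])
  also have "\<dots> \<le> \<delta> * (D / 2)" using row by (rule mult_right_mono) (simp add: \<open>0 \<le> D\<close>)
  also have "\<dots> \<le> 1 / 2" using \<open>\<delta> * D \<le> 1\<close> by simp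
  finally have "- E \<le> 1 / 2" by (rule abs_le_D2)
  moreover have "(\<Sum>y\<in>UNIV. Q' x y * (2 * h y)) = 2 * (\<Sum>y\<in>UNIV. Q x y * h y) - 2 * E"
    unfolding E_def by (simp add: algebra_simps sum_subtractf sum_distrib_left)
  ultimately show ?thesis using hx by linarith
qed

lemma poisson_constant_eq:
  assumes mu: "stationary_distribution Q mu"
    and e: "\<And>x. e x = c + w x + (\<Sum>y\<in>UNIV. Q x y * e y)"
  shows "c = - (\<Sum>x\<in>UNIV. mu x * w x)"
proof -
  have "(\<Sum>x\<in>UNIV. mu x * e x) = (\<Sum>x\<in>UNIV. mu x * (c + w x + (\<Sum>y\<in>UNIV. Q x y * e y)))"
    by (intro sum.cong refl) (simp only: e[symmetric])
  also have "\<dots> = (\<Sum>x\<in>UNIV. mu x) * c + (\<Sum>x\<in>UNIV. mu x * w x)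
      + (\<Sum>x\<in>UNIV. mu x * (\<Sum>y\<in>UNIV. Q x y * e y))"
    by (simp add: distrib_left sum.distrib sum_distrib_right)
  finally show ?thesis
    using stationary_sum_mult[OF mu, of e] mu unfolding stationary_distribution_def by simp
qed

text \<open>The bias difference e = b - b' solves a Poisson equation for Q' whose right-hand side,
  the gain difference plus (Q - Q') b, is of order \<delta> times the span of b.\<close>
lemma poisson_perturbation_span:
  fixes Q Q' :: "'s::finite \<Rightarrow> 's \<Rightarrow> real"
  assumes Q: "stochastic Q" and Q': "stochastic Q'" and reach_z: "\<And>x. reach Q' x z"
    and mu': "stationary_distribution Q' mu'"
    and Hz: "H z \<ge> 0" and H: "\<And>x. x \<noteq> z \<Longrightarrow> 1 + (\<Sum>y\<in>UNIV. Q' x y * H y) \<le> H x"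
    and row: "\<And>x. (\<Sum>y\<in>UNIV. \<bar>Q x y - Q' x y\<bar>) \<le> \<delta>"
    and b: "\<And>x. g + b x = rho x + (\<Sum>y\<in>UNIV. Q x y * b y)" and b_span: "\<And>x. \<bar>b x - b z\<bar> \<le> B"
    and b': "\<And>x. g' + b' x = rho x + (\<Sum>y\<in>UNIV. Q' x y * b' y)"
  shows "\<bar>(b x - b' x) - (b z - b' z)\<bar> \<le> 2 * \<delta> * B * H x"
proof -
  define w where "w x = (\<Sum>y\<in>UNIV. (Q x y - Q' x y) * b y)" for x
  have w: "\<bar>w x\<bar> \<le> \<delta> * B" for x
  proof -
    have "\<bar>w x\<bar> \<le> (\<Sum>y\<in>UNIV. \<bar>Q x y - Q' x y\<bar>) * B"
      unfolding w_def using stochastic_row_diff_sum[OF Q Q'] b_span by (rule abs_sum_zero_sum_weights_le)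
    also have "\<dots> \<le> \<delta> * B" using row b_span[of z] by (intro mult_right_mono) simp_all
    finally show ?thesis .
  qed
  have e: "b x - b' x = (g' - g + w x) + (\<Sum>y\<in>UNIV. Q' x y * (b y - b' y))" for x
    using b[of x] b'[of x] by (simp add: w_def algebra_simps sum_subtractf)
  have "\<bar>g' - g\<bar> \<le> \<delta> * B"
    using poisson_constant_eq[OF mu', of "\<lambda>x. b x - b' x" "g' - g" w, OF e]
      abs_sum_distribution_le[of mu' w] w mu' unfolding stationary_distribution_def by simp
  then have v: "\<bar>g' - g + w x\<bar> \<le> 2 * \<delta> * B" for x using w[of x] by (simp add: abs_le_iff)
  show ?thesis
    by (rule poisson_span_le_potential[where z = z and H = H and f = "\<lambda>x. b x - b' x"
          and v = "\<lambda>x. g' - g + w x"]) (assumption | rule Q' reach_z Hz H e v)+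
qed

lemma poisson_span_le:
  fixes Q :: "'s::finite \<Rightarrow> 's \<Rightarrow> real"
  assumes Q: "stochastic Q" and reach_z: "\<And>x. reach Q x z"
    and Hz: "H z \<ge> 0" and H: "\<And>x. x \<noteq> z \<Longrightarrow> 1 + (\<Sum>y\<in>UNIV. Q x y * H y) \<le> H x"
    and H_le: "\<And>x. H x \<le> D"
    and b: "\<And>x. g + b x = rho x + (\<Sum>y\<in>UNIV. Q x y * b y)"
    and rho: "\<And>x. \<bar>rho x\<bar> \<le> R" and g: "\<bar>g\<bar> \<le> R"
  shows "\<bar>b x - b z\<bar> \<le> 2 * R * D"
proof -
  have "\<bar>b x - b z\<bar> \<le> (2 * R) * H x"
  proof (rule poisson_span_le_potential[where H = H and v = "\<lambda>x. rho x - g", OF Q reach_z Hz])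
    show "\<And>x. x \<noteq> z \<Longrightarrow> 1 + (\<Sum>y\<in>UNIV. Q x y * H y) \<le> H x" by (fact H)
    show "b x = rho x - g + (\<Sum>y\<in>UNIV. Q x y * b y)" for x using b[of x] by simp
    show "\<bar>rho x - g\<bar> \<le> 2 * R" for x using rho[of x] g by (simp add: abs_le_iff)
  qed
  also have "\<dots> \<le> 2 * R * D" using H_le[of x] rho[of x] by (intro mult_left_mono) simp_all
  finally show ?thesis .
qed

lemma poisson_perturbation_bounds:
  fixes Q Q' :: "'s::finite \<Rightarrow> 's \<Rightarrow> real"
  assumes Q: "stochastic Q" and Q': "stochastic Q'"
    and reach_z: "\<And>x. reach Q x z" and reach_z': "\<And>x. reach Q' x z"
    and hx: "\<And>x. x \<noteq> z \<Longrightarrow> h x = 1 + (\<Sum>y\<in>UNIV. Q x y * h y)"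
    and h: "\<And>x. 0 \<le> h x" and hD: "\<And>x. h x \<le> D"
    and row: "\<And>x. (\<Sum>y\<in>UNIV. \<bar>Q x y - Q' x y\<bar>) \<le> \<delta>" and "\<delta> * D \<le> 1"
    and b: "\<And>x. g + b x = rho x + (\<Sum>y\<in>UNIV. Q x y * b y)"
    and b': "\<And>x. g' + b' x = rho x + (\<Sum>y\<in>UNIV. Q' x y * b' y)"
    and rho: "\<And>x. \<bar>rho x\<bar> \<le> R" and g: "\<bar>g\<bar> \<le> R" and g': "\<bar>g'\<bar> \<le> R"
  shows "\<bar>b' x - b' z\<bar> \<le> 4 * R * D"
    and "\<bar>(b x - b' x) - (b z - b' z)\<bar> \<le> 8 * \<delta> * R * D * D"
proof -
  have h1: "1 + (\<Sum>y\<in>UNIV. Q x y * h y) \<le> h x" if "x \<noteq> z" for x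
    using hx[OF that] by simp
  have h2: "1 + (\<Sum>y\<in>UNIV. Q' x y * (2 * h y)) \<le> 2 * h x" if "x \<noteq> z" for x
    using Q Q' hx[OF that] h hD row \<open>\<delta> * D \<le> 1\<close> by (rule doubled_potential_supersolution)
  obtain mu' where mu': "stationary_distribution Q' mu'" using stationary_distribution_exists[OF Q'] .
  have b_span: "\<bar>b x - b z\<bar> \<le> 2 * R * D" for x
    by (rule poisson_span_le[where b = b and z = z and H = h])
      (assumption | rule Q reach_z h h1 hD b rho g)+
  have "\<bar>b' x - b' z\<bar> \<le> 2 * R * (2 * D)"
    by (rule poisson_span_le[where b = b' and z = z and H = "\<lambda>x. 2 * h x"])
      (assumption | rule Q' reach_z' h2 b' rho g' | simp add: h hD)+
  then show "\<bar>b' x - b' z\<bar> \<le> 4 * R * D" by simp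
  have "\<bar>(b x - b' x) - (b z - b' z)\<bar> \<le> 2 * \<delta> * (2 * R * D) * (2 * h x)"
    by (rule poisson_perturbation_span[where z = z and H = "\<lambda>x. 2 * h x" and b = b and b' = b'])
      (assumption | rule Q Q' reach_z' mu' h2 row b b_span b' | simp add: h)+
  also have "\<dots> \<le> 2 * \<delta> * (2 * R * D) * (2 * D)"
  proof -
    have "0 \<le> \<delta>" by (rule order_trans[OF sum_nonneg row[of z]]) simp
    moreover have "0 \<le> R" by (rule order_trans[OF abs_ge_zero rho[of z]])
    moreover have "0 \<le> D" by (rule order_trans[OF h hD[of z]])
    ultimately show ?thesis using hD[of x] by (intro mult_left_mono) simp_all
  qed
  finally show "\<bar>(b x - b' x) - (b z - b' z)\<bar> \<le> 8 * \<delta> * R * D * D" by (simp add: algebra_simps)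
qed

section \<open>Policies of the MDP\<close>

lemma stochastic_pol_mat: "mdp_stochastic P \<Longrightarrow> stochastic (pol_mat P pol)"
  unfolding mdp_stochastic_def stochastic_def pol_mat_def by auto

lemma reach_pol_mat_same_support:
  assumes "same_support P P'"
  shows "reach (pol_mat P' pol) x y \<longleftrightarrow> reach (pol_mat P pol) x y"
proof -
  have "{(u, v). pol_mat P' pol u v > 0} = {(u, v). pol_mat P pol u v > 0}"
    using assms unfolding same_support_def pol_mat_def by auto
  then show ?thesis unfolding reach_def by simp
qed

lemma row_dist_le_mdp_dist:
  fixes P P' :: "bool \<Rightarrow> 's::finite \<Rightarrow> 's \<Rightarrow> real"
  shows "(\<Sum>y\<in>UNIV. \<bar>P c x y - P' c x y\<bar>) \<le> mdp_dist P P'"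
proof -
  have "{\<Sum>y\<in>UNIV. \<bar>P c x y - P' c x y\<bar> | x. True} = range (\<lambda>x. \<Sum>y\<in>UNIV. \<bar>P c x y - P' c x y\<bar>)"
    by auto
  then have "(\<Sum>y\<in>UNIV. \<bar>P c x y - P' c x y\<bar>) \<le> mat_inf_norm (\<lambda>x y. P c x y - P' c x y)"
    unfolding mat_inf_norm_def by simp
  then show ?thesis unfolding mdp_dist_def by (cases c) auto
qed

lemma hit_time_le_max_diameter:
  fixes P :: "bool \<Rightarrow> 's::finite \<Rightarrow> 's \<Rightarrow> real"
  assumes "recurrent (pol_mat P pol) z"
  shows "hit_time (pol_mat P pol) x z \<le> max_diameter P"
proof -
  let ?Q = "pol_mat P pol"
  have "{hit_time ?Q x y | x y. recurrent ?Q y} \<subseteq> range (\<lambda>(x, y). hit_time ?Q x y)" by auto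
  then have "finite {hit_time ?Q x y | x y. recurrent ?Q y}" by (rule finite_subset) simp
  then have "hit_time ?Q x z \<le> Defs.diameter ?Q"
    unfolding Defs.diameter_def using assms by (intro Max_ge) blast+
  also have "{Defs.diameter (pol_mat P pol) | pol. True} = range (\<lambda>pol. Defs.diameter (pol_mat P pol))"
    by auto
  then have "Defs.diameter ?Q \<le> max_diameter P" unfolding max_diameter_def by simp
  finally show ?thesis .
qed

lemma pol_mat_hitting_potential:
  fixes P :: "bool \<Rightarrow> 's::finite \<Rightarrow> 's \<Rightarrow> real"
  assumes P: "mdp_stochastic P" and "unichain P"
  obtains z h where "\<And>x. reach (pol_mat P pol) x z" "h z = 0"
    "\<And>x. x \<noteq> z \<Longrightarrow> h x = 1 + (\<Sum>y\<in>UNIV. pol_mat P pol x y * h y)"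
    "\<And>x. 0 \<le> h x" "\<And>x. h x \<le> max_diameter P"
proof -
  let ?Q = "pol_mat P pol"
  have Q: "stochastic ?Q" using P by (rule stochastic_pol_mat)
  have "unichain_mat ?Q" using \<open>unichain P\<close> unfolding unichain_def by blast
  then obtain z where "recurrent ?Q z" and reach_z: "\<And>x. reach ?Q x z"
    using unichain_mat_center by blast
  obtain h where hz: "h z = 0" and hx: "\<And>x. x \<noteq> z \<Longrightarrow> h x = 1 + (\<Sum>y\<in>UNIV. ?Q x y * h y)"
    and h: "\<And>x. 0 \<le> h x" and ht: "\<And>x. hit_time ?Q x z = h x"
    using hitting_potential[OF Q reach_z] by blast
  have "h x \<le> max_diameter P" for x
    using hit_time_le_max_diameter[OF \<open>recurrent ?Q z\<close>] by (simp add: ht)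
  with reach_z hz hx h show ?thesis by (rule that)
qed

lemma stat_dist_stationary:
  fixes Q :: "'s::finite \<Rightarrow> 's \<Rightarrow> real"
  assumes "stochastic Q"
  shows "stationary_distribution Q (stat_dist Q)"
  unfolding stat_dist_def stationary_distribution_def[symmetric]
  using stationary_distribution_exists[OF assms] by (metis someI)

lemma bias_poisson:
  fixes P :: "bool \<Rightarrow> 's::finite \<Rightarrow> 's \<Rightarrow> real"
  assumes Q: "stochastic (pol_mat P pol)" and reach_z: "\<And>x. reach (pol_mat P pol) x z"
  shows "gain P r lam pol + bias P r lam pol x
    = pol_rew r lam pol x + (\<Sum>y\<in>UNIV. pol_mat P pol x y * bias P r lam pol y)"
proof -
  let ?Q = "pol_mat P pol"
  have mu: "stationary_distribution ?Q (stat_dist ?Q)" using Q by (rule stat_dist_stationary)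
  obtain b where "\<And>x. gain P r lam pol + b x = pol_rew r lam pol x + (\<Sum>y\<in>UNIV. ?Q x y * b y)"
    and "(\<Sum>x\<in>UNIV. stat_dist ?Q x * b x) = 0"
    using poisson_solvable[OF Q reach_z mu, where rho = "pol_rew r lam pol"] unfolding gain_def by blast
  then have "\<exists>b. (\<forall>x. gain P r lam pol + b x = pol_rew r lam pol x + (\<Sum>y\<in>UNIV. ?Q x y * b y))
      \<and> (\<Sum>x\<in>UNIV. stat_dist ?Q x * b x) = 0" by blast
  then show ?thesis unfolding bias_def by (rule someI2_ex) blast
qed

lemma abs_pol_rew_le:
  fixes r :: "bool \<Rightarrow> 's::finite \<Rightarrow> real"
  assumes "\<bar>lam\<bar> \<le> L"
  shows "\<bar>pol_rew r lam pol x\<bar> \<le> (\<Sum>x\<in>UNIV. \<bar>r True x\<bar> + \<bar>r False x\<bar>) + L"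
proof -
  have "\<bar>r True x\<bar> + \<bar>r False x\<bar> \<le> (\<Sum>x\<in>UNIV. \<bar>r True x\<bar> + \<bar>r False x\<bar>)"
    by (rule member_le_sum) simp_all
  moreover have "\<bar>pol_rew r lam pol x\<bar> \<le> \<bar>r True x\<bar> + \<bar>r False x\<bar> + \<bar>lam\<bar>"
    unfolding pol_rew_def by (auto simp: abs_le_iff)
  ultimately show ?thesis using assms by linarith
qed

lemma abs_gain_le:
  assumes "mdp_stochastic P" and "\<bar>lam\<bar> \<le> L"
  shows "\<bar>gain P r lam pol\<bar> \<le> (\<Sum>x\<in>UNIV. \<bar>r True x\<bar> + \<bar>r False x\<bar>) + L"
  using stat_dist_stationary[OF stochastic_pol_mat[OF assms(1)]] abs_pol_rew_le[OF assms(2)]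
  unfolding gain_def stationary_distribution_def by (intro abs_sum_distribution_le) auto

lemma abs_adv_diff_le:
  fixes P P' :: "bool \<Rightarrow> 's::finite \<Rightarrow> 's \<Rightarrow> real"
  assumes P: "mdp_stochastic P" and P': "mdp_stochastic P'"
    and e: "\<And>y. \<bar>(bias P r lam pol y - bias P' r lam pol y)
                  - (bias P r lam pol z - bias P' r lam pol z)\<bar> \<le> E"
    and b': "\<And>y. \<bar>bias P' r lam pol y - bias P' r lam pol z\<bar> \<le> B"
  shows "\<bar>adv P r pol s lam - adv P' r pol s lam\<bar> \<le> 2 * E + 2 * mdp_dist P P' * B"
proof -
  define b b' where "b = bias P r lam pol" and "b' = bias P' r lam pol"
  define A where "A y = P True s y - P False s y" for y
  define A' where "A' y = (P True s y - P' True s y) - (P False s y - P' False s y)" for y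
  have P_rows: "stochastic (P c)" "stochastic (P' c)" for c
    using P P' unfolding mdp_stochastic_def by auto
  have "adv P r pol s lam - adv P' r pol s lam
      = (\<Sum>y\<in>UNIV. (P True s y - P False s y) * b y - (P' True s y - P' False s y) * b' y)"
    unfolding adv_def b_def b'_def by (simp add: sum_subtractf)
  also have "\<dots> = (\<Sum>y\<in>UNIV. A y * (b y - b' y)) + (\<Sum>y\<in>UNIV. A' y * b' y)"
    unfolding A_def A'_def by (simp add: algebra_simps sum.distrib sum_subtractf)
  finally have split: "adv P r pol s lam - adv P' r pol s lam
      = (\<Sum>y\<in>UNIV. A y * (b y - b' y)) + (\<Sum>y\<in>UNIV. A' y * b' y)" .
  have "\<bar>\<Sum>y\<in>UNIV. A y * (b y - b' y)\<bar> \<le> (\<Sum>y\<in>UNIV. \<bar>A y\<bar>) * E"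
    using stochastic_row_diff_sum[OF P_rows(1,1)] e unfolding A_def b_def b'_def
    by (rule abs_sum_zero_sum_weights_le)
  also have "\<dots> \<le> 2 * E"
    using sum_abs_stochastic_row_diff_le[OF P_rows(1,1)] e[of z] unfolding A_def
    by (intro mult_right_mono) simp_all
  finally have first: "\<bar>\<Sum>y\<in>UNIV. A y * (b y - b' y)\<bar> \<le> 2 * E" .
  have "(\<Sum>y\<in>UNIV. A' y) = 0"
    unfolding A'_def by (simp add: sum_subtractf stochastic_row_sum[OF P_rows(1)] stochastic_row_sum[OF P_rows(2)])
  then have "\<bar>\<Sum>y\<in>UNIV. A' y * b' y\<bar> \<le> (\<Sum>y\<in>UNIV. \<bar>A' y\<bar>) * B"
    using b' unfolding b'_def by (rule abs_sum_zero_sum_weights_le)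
  also have "\<dots> \<le> 2 * mdp_dist P P' * B"
  proof (rule mult_right_mono)
    have "(\<Sum>y\<in>UNIV. \<bar>A' y\<bar>)
        \<le> (\<Sum>y\<in>UNIV. \<bar>P True s y - P' True s y\<bar>) + (\<Sum>y\<in>UNIV. \<bar>P False s y - P' False s y\<bar>)"
      unfolding A'_def by (simp add: sum_mono abs_triangle_ineq4 flip: sum.distrib)
    then show "(\<Sum>y\<in>UNIV. \<bar>A' y\<bar>) \<le> 2 * mdp_dist P P'"
      using row_dist_le_mdp_dist[of P True s P'] row_dist_le_mdp_dist[of P False s P'] by linarith
    show "0 \<le> B" using b'[of z] by simp
  qed
  finally show ?thesis using split first by (simp add: abs_le_iff)
qed

lemma adv_perturbation_bound:
  fixes P P' :: "bool \<Rightarrow> 's::finite \<Rightarrow> 's \<Rightarrow> real" and r :: "bool \<Rightarrow> 's \<Rightarrow> real"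
  assumes P: "mdp_stochastic P" and P': "mdp_stochastic P'" and supp: "same_support P P'"
    and "unichain P" and dist: "mdp_dist P P' \<le> 1 / max_diameter P" and lam: "\<bar>lam\<bar> \<le> L"
  defines "R \<equiv> (\<Sum>x\<in>UNIV. \<bar>r True x\<bar> + \<bar>r False x\<bar>) + L" and "D \<equiv> max_diameter P"
  shows "\<bar>adv P r pol s lam - adv P' r pol s lam\<bar> \<le> 8 * R * D * (2 * D + 1) * mdp_dist P P'"
proof -
  define Q Q' \<delta> where "Q = pol_mat P pol" and "Q' = pol_mat P' pol" and "\<delta> = mdp_dist P P'"
  define b b' where "b = bias P r lam pol" and "b' = bias P' r lam pol"
  have Q: "stochastic Q" and Q': "stochastic Q'"
    unfolding Q_def Q'_def using P P' by (simp_all add: stochastic_pol_mat)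
  obtain z h where reach_z: "\<And>x. reach Q x z" and "h z = 0"
    and hx: "\<And>x. x \<noteq> z \<Longrightarrow> h x = 1 + (\<Sum>y\<in>UNIV. Q x y * h y)"
    and h: "\<And>x. 0 \<le> h x" and hD: "\<And>x. h x \<le> D"
    using pol_mat_hitting_potential[OF P \<open>unichain P\<close>] unfolding Q_def D_def by blast
  have reach_z': "reach Q' x z" for x
    using reach_z[of x] reach_pol_mat_same_support[OF supp] by (simp add: Q_def Q'_def)
  have row: "(\<Sum>y\<in>UNIV. \<bar>Q x y - Q' x y\<bar>) \<le> \<delta>" for x
    unfolding Q_def Q'_def pol_mat_def \<delta>_def by (rule row_dist_le_mdp_dist)
  have "\<delta> * D \<le> 1"
  proof (cases "D = 0")
    case False
    have "0 \<le> D" using hD[of z] \<open>h z = 0\<close> by simp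
    with False show ?thesis using mult_right_mono[OF dist \<open>0 \<le> D\<close>] by (simp add: \<delta>_def D_def)
  qed simp
  have b: "gain P r lam pol + b x = pol_rew r lam pol x + (\<Sum>y\<in>UNIV. Q x y * b y)" for x
    unfolding b_def Q_def by (rule bias_poisson) (use Q reach_z in \<open>simp_all add: Q_def\<close>)
  have b': "gain P' r lam pol + b' x = pol_rew r lam pol x + (\<Sum>y\<in>UNIV. Q' x y * b' y)" for x
    unfolding b'_def Q'_def by (rule bias_poisson) (use Q' reach_z' in \<open>simp_all add: Q'_def\<close>)
  have rho: "\<bar>pol_rew r lam pol x\<bar> \<le> R" for x unfolding R_def using lam by (rule abs_pol_rew_le)
  have g: "\<bar>gain P r lam pol\<bar> \<le> R" and g': "\<bar>gain P' r lam pol\<bar> \<le> R"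
    unfolding R_def using P P' lam by (simp_all add: abs_gain_le)
  note spans =
    poisson_perturbation_bounds[OF Q Q' reach_z reach_z' hx h hD row \<open>\<delta> * D \<le> 1\<close> b b' rho g g']
  have "\<bar>adv P r pol s lam - adv P' r pol s lam\<bar> \<le> 2 * (8 * \<delta> * R * D * D) + 2 * \<delta> * (4 * R * D)"
    using P P' spans(2) spans(1) unfolding b_def b'_def \<delta>_def by (rule abs_adv_diff_le)
  also have "\<dots> = 8 * R * D * (2 * D + 1) * mdp_dist P P'" by (simp add: \<delta>_def algebra_simps)
  finally show ?thesis .
qed

theorem mainTheorem6:
  fixes P :: "bool \<Rightarrow> 's::finite \<Rightarrow> 's \<Rightarrow> real" and r :: "bool \<Rightarrow> 's \<Rightarrow> real"
    and a b :: real
  assumes "mdp_stochastic P" and "unichain P" and "indexable P r" and "a \<le> b"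
  shows "\<exists>c::real. \<forall>Ph :: bool \<Rightarrow> 's \<Rightarrow> 's \<Rightarrow> real.
           mdp_stochastic Ph \<and> same_support P Ph \<and> assumption_A P r Ph \<longrightarrow>
           (\<forall>s pol. \<forall>lam\<in>{a..b}. \<bar>adv P r pol s lam - adv Ph r pol s lam\<bar> \<le> c * mdp_dist P Ph)"
  \<comment> \<open>Neither indexability nor the index-gap half of Assumption (A) is needed for this bound.\<close>
proof -
  define R where "R = (\<Sum>x\<in>UNIV. \<bar>r True x\<bar> + \<bar>r False x\<bar>) + (\<bar>a\<bar> + \<bar>b\<bar>)"
  define D where "D = max_diameter P"
  show ?thesis
  proof (intro exI[of _ "8 * R * D * (2 * D + 1)"] allI impI ballI)
    fix Ph :: "bool \<Rightarrow> 's \<Rightarrow> 's \<Rightarrow> real" and s pol lam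
    assume "mdp_stochastic Ph \<and> same_support P Ph \<and> assumption_A P r Ph" and "lam \<in> {a..b}"
    moreover have "\<bar>lam\<bar> \<le> \<bar>a\<bar> + \<bar>b\<bar>" using \<open>lam \<in> {a..b}\<close> by auto
    ultimately show "\<bar>adv P r pol s lam - adv Ph r pol s lam\<bar> \<le> 8 * R * D * (2 * D + 1) * mdp_dist P Ph"
      unfolding R_def D_def assumption_A_def using assms(1,2)
      by (intro adv_perturbation_bound) auto
  qed
qed

end
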